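(* Let $R$ be a commutative local ring, $s\in R$, and $A\in M_2(R;s)$. Then ($\det_s(A)\in J(R)$, $tr(A)\in J(R)$ and $A$ is strongly $J$-clean in $M_2(R;s)$) if and only if $A\in J\big(M_2(R;s)\big)$.
   Context: A commutative ring $R$ is local if it has a unique maximal ideal $J(R)$ (its Jacobson radical); $J(T)$ denotes the Jacobson radical of a ring $T$. For a commutative ring $R$ and $s\in R$, $M_2(R;s)$ denotes the ring whose elements are the $2\times 2$ arrays $\left[\begin{smallmatrix} a&b\\ c&d\end{smallmatrix}\right]$ with $a,b,c,d\in R$, with componentwise addition and multiplication $\left[\begin{smallmatrix} a&b\\ c&d\end{smallmatrix}\right]\left[\begin{smallmatrix} a'&b'\\ c'&d'\end{smallmatrix}\right]=\left[\begin{smallmatrix} aa'+s^2bc'&ab'+bd'\\ ca'+dc'&s^2cb'+dd'\end{smallmatrix}\right]$. For $A=\left[\begin{smallmatrix} a&b\\ c&d\end{smallmatrix}\right]$, $\det_s(A)=ad-s^2bc$ and $tr(A)=a+d$. An element $a$ of a ring $T$ is strongly $J$-clean if there is an idempotent $e\in T$ with $ae=ea$ and $a-e\in J(T)$. *)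

theory Defs
  imports "HOL-Algebra.Algebra"
begin

definition left_ideal :: "'a set \<Rightarrow> ('a, 'b) ring_scheme \<Rightarrow> bool" where
  "left_ideal I T \<longleftrightarrow> additive_subgroup I T \<and>
     (\<forall>a\<in>I. \<forall>x\<in>carrier T. x \<otimes>\<^bsub>T\<^esub> a \<in> I)"

definition maximal_left_ideal :: "'a set \<Rightarrow> ('a, 'b) ring_scheme \<Rightarrow> bool" where
  "maximal_left_ideal I T \<longleftrightarrow> left_ideal I T \<and> I \<noteq> carrier T \<and>
     (\<forall>K. left_ideal K T \<and> I \<subseteq> K \<longrightarrow> K = I \<or> K = carrier T)"

definition jacobson :: "('a, 'b) ring_scheme \<Rightarrow> 'a set" where
  "jacobson T = carrier T \<inter> \<Inter> {I. maximal_left_ideal I T}"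

definition local_cring :: "('a, 'b) ring_scheme \<Rightarrow> bool" where
  "local_cring R \<longleftrightarrow> cring R \<and> (\<exists>!M. maximalideal M R)"

definition strongly_J_clean :: "('a, 'b) ring_scheme \<Rightarrow> 'a \<Rightarrow> bool" where
  "strongly_J_clean T a \<longleftrightarrow>
     (\<exists>e\<in>carrier T. e \<otimes>\<^bsub>T\<^esub> e = e \<and> a \<otimes>\<^bsub>T\<^esub> e = e \<otimes>\<^bsub>T\<^esub> a
        \<and> a \<ominus>\<^bsub>T\<^esub> e \<in> jacobson T)"

text \<open>The generalized matrix ring M_2(R;s); the array [[a,b],[c,d]] is the tuple (a,b,c,d).\<close>

definition m2_mult :: "('a, 'b) ring_scheme \<Rightarrow> 'a \<Rightarrow> 'a \<times> 'a \<times> 'a \<times> 'a \<Rightarrow> 'a \<times> 'a \<times> 'a \<times> 'a \<Rightarrow> 'a \<times> 'a \<times> 'a \<times> 'a" where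
  "m2_mult R s P Q = (case P of (a,b,c,d) \<Rightarrow> case Q of (a',b',c',d') \<Rightarrow>
        (a \<otimes>\<^bsub>R\<^esub> a' \<oplus>\<^bsub>R\<^esub> (s \<otimes>\<^bsub>R\<^esub> s) \<otimes>\<^bsub>R\<^esub> b \<otimes>\<^bsub>R\<^esub> c',
         a \<otimes>\<^bsub>R\<^esub> b' \<oplus>\<^bsub>R\<^esub> b \<otimes>\<^bsub>R\<^esub> d',
         c \<otimes>\<^bsub>R\<^esub> a' \<oplus>\<^bsub>R\<^esub> d \<otimes>\<^bsub>R\<^esub> c',
         (s \<otimes>\<^bsub>R\<^esub> s) \<otimes>\<^bsub>R\<^esub> c \<otimes>\<^bsub>R\<^esub> b' \<oplus>\<^bsub>R\<^esub> d \<otimes>\<^bsub>R\<^esub> d'))"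

definition m2_add :: "('a, 'b) ring_scheme \<Rightarrow> 'a \<times> 'a \<times> 'a \<times> 'a \<Rightarrow> 'a \<times> 'a \<times> 'a \<times> 'a \<Rightarrow> 'a \<times> 'a \<times> 'a \<times> 'a" where
  "m2_add R P Q = (case P of (a,b,c,d) \<Rightarrow> case Q of (a',b',c',d') \<Rightarrow>
        (a \<oplus>\<^bsub>R\<^esub> a', b \<oplus>\<^bsub>R\<^esub> b', c \<oplus>\<^bsub>R\<^esub> c', d \<oplus>\<^bsub>R\<^esub> d'))"

definition M2s :: "('a, 'b) ring_scheme \<Rightarrow> 'a \<Rightarrow> ('a \<times> 'a \<times> 'a \<times> 'a) ring" where
  "M2s R s = \<lparr> carrier = {(a,b,c,d). a \<in> carrier R \<and> b \<in> carrier R \<and> c \<in> carrier R \<and> d \<in> carrier R},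
     monoid.mult = m2_mult R s,
     one = (\<one>\<^bsub>R\<^esub>, \<zero>\<^bsub>R\<^esub>, \<zero>\<^bsub>R\<^esub>, \<one>\<^bsub>R\<^esub>),
     ring.zero = (\<zero>\<^bsub>R\<^esub>, \<zero>\<^bsub>R\<^esub>, \<zero>\<^bsub>R\<^esub>, \<zero>\<^bsub>R\<^esub>),
     ring.add = m2_add R \<rparr>"

definition det_s :: "('a, 'b) ring_scheme \<Rightarrow> 'a \<Rightarrow> 'a \<times> 'a \<times> 'a \<times> 'a \<Rightarrow> 'a" where
  "det_s R s A = (case A of (a,b,c,d) \<Rightarrow> a \<otimes>\<^bsub>R\<^esub> d \<ominus>\<^bsub>R\<^esub> (s \<otimes>\<^bsub>R\<^esub> s) \<otimes>\<^bsub>R\<^esub> b \<otimes>\<^bsub>R\<^esub> c)"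

definition tr2 :: "('a, 'b) ring_scheme \<Rightarrow> 'a \<times> 'a \<times> 'a \<times> 'a \<Rightarrow> 'a" where
  "tr2 R A = (case A of (a,b,c,d) \<Rightarrow> a \<oplus>\<^bsub>R\<^esub> d)"

end

theory Submission
  imports Defs
begin

text \<open>In a local ring the elements outside the maximal ideal M are units, so J(R) = M.
  Left multiplication in M_2(R;s) acts on the columns separately, and the matrices whose first
  (resp. second) column (x, y) has x \<in> M and s y \<in> M form a maximal left ideal. Hence the
  radical lies in the set of matrices with diagonal entries and s times the off-diagonal
  entries in M; conversely, for U in this set det_s(1 - T U) \<in> 1 + M is a unit, so 1 - T U has
  a left inverse. If A - E is radical for an idempotent E, then E inherits trace and
  determinant in M from A, and Cayley--Hamilton, E = E^2 = tr(E) E - det(E) I, puts E and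
  therefore A into the radical.\<close>

lemma (in ring) left_idealI:
  assumes "L \<subseteq> carrier R" "\<zero> \<in> L" "\<And>a b. a \<in> L \<Longrightarrow> b \<in> L \<Longrightarrow> a \<oplus> b \<in> L"
    "\<And>a. a \<in> L \<Longrightarrow> \<ominus> a \<in> L" "\<And>a x. a \<in> L \<Longrightarrow> x \<in> carrier R \<Longrightarrow> x \<otimes> a \<in> L"
  shows "left_ideal L R"
  unfolding left_ideal_def
proof
  show "additive_subgroup L R"
  proof (rule additive_subgroupI, rule add.subgroupI, goal_cases)
    case (3 a) then show ?case using assms(4) unfolding a_inv_def by simp
  qed (use assms(1-3) in auto)
qed (use assms(5) in blast)

lemma left_idealD:
  assumes "left_ideal L R"
  shows "L \<subseteq> carrier R" "\<zero>\<^bsub>R\<^esub> \<in> L" "\<And>a b. a \<in> L \<Longrightarrow> b \<in> L \<Longrightarrow> a \<oplus>\<^bsub>R\<^esub> b \<in> L"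
    "\<And>a. a \<in> L \<Longrightarrow> \<ominus>\<^bsub>R\<^esub> a \<in> L" "\<And>a x. a \<in> L \<Longrightarrow> x \<in> carrier R \<Longrightarrow> x \<otimes>\<^bsub>R\<^esub> a \<in> L"
proof -
  have L: "additive_subgroup L R" using assms unfolding left_ideal_def by simp
  show "L \<subseteq> carrier R" by (rule additive_subgroup.a_subset[OF L])
  show "\<zero>\<^bsub>R\<^esub> \<in> L" by (rule additive_subgroup.zero_closed[OF L])
  show "\<And>a b. a \<in> L \<Longrightarrow> b \<in> L \<Longrightarrow> a \<oplus>\<^bsub>R\<^esub> b \<in> L" by (rule additive_subgroup.a_closed[OF L])
  show "\<And>a. a \<in> L \<Longrightarrow> \<ominus>\<^bsub>R\<^esub> a \<in> L" by (rule additive_subgroup.a_inv_closed[OF L])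
  show "\<And>a x. a \<in> L \<Longrightarrow> x \<in> carrier R \<Longrightarrow> x \<otimes>\<^bsub>R\<^esub> a \<in> L"
    using assms unfolding left_ideal_def by blast
qed

lemma left_ideal_of_ideal: "ideal I R \<Longrightarrow> left_ideal I R"
  unfolding left_ideal_def by (simp add: ideal.axioms(1) ideal.I_l_closed)

lemma (in ring) left_ideal_one_carrier:
  assumes "left_ideal K R" "\<one> \<in> K" shows "K = carrier R"
proof
  show "carrier R \<subseteq> K"
    using left_idealD(5)[OF assms] by (metis r_one subsetI)
qed (rule left_idealD(1)[OF assms(1)])

lemma (in ring) maximal_left_idealI:
  assumes L: "left_ideal L R" "\<one> \<notin> L"
    and comaximal: "\<And>x. x \<in> carrier R \<Longrightarrow> x \<notin> L \<Longrightarrow> \<exists>y\<in>carrier R. \<exists>l\<in>L. y \<otimes> x \<oplus> l = \<one>"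
  shows "maximal_left_ideal L R"
  unfolding maximal_left_ideal_def
proof (intro conjI allI impI)
  fix K assume K: "left_ideal K R \<and> L \<subseteq> K"
  show "K = L \<or> K = carrier R"
  proof (cases "K = L")
    case False
    then obtain x where x: "x \<in> K" "x \<notin> L" using K by blast
    then obtain y l where yl: "y \<in> carrier R" "l \<in> L" "y \<otimes> x \<oplus> l = \<one>"
      using comaximal left_idealD(1)[of K R] K by blast
    have "y \<otimes> x \<oplus> l \<in> K" using K x yl by (blast intro: left_idealD(3,5))
    then have "\<one> \<in> K" using yl by simp
    then show ?thesis using left_ideal_one_carrier K by blast
  qed simp
qed (use L in auto)

lemma (in ring) left_ideal_Int:
  assumes "left_ideal K R" "left_ideal L R" shows "left_ideal (K \<inter> L) R"
  by (rule left_idealI) (use left_idealD[OF assms(1)] left_idealD[OF assms(2)] in auto)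

lemma jacobson_subset_maximal_left_ideal:
  "maximal_left_ideal L T \<Longrightarrow> jacobson T \<subseteq> L"
  unfolding jacobson_def by blast

lemma (in ring) left_ideal_add_left_multiples:
  assumes L: "left_ideal L R" and u: "u \<in> carrier R"
  shows "left_ideal {l \<oplus> t \<otimes> u | l t. l \<in> L \<and> t \<in> carrier R} R" (is "left_ideal ?K R")
proof (rule left_idealI)
  show "?K \<subseteq> carrier R" using left_idealD(1)[OF L] u by auto
  have "\<zero> = \<zero> \<oplus> \<zero> \<otimes> u" using u by simp
  then show "\<zero> \<in> ?K" using left_idealD(2)[OF L] by blast
next
  fix a b assume "a \<in> ?K" "b \<in> ?K"
  then obtain l t l' t' where h: "l \<in> L" "t \<in> carrier R" "l' \<in> L" "t' \<in> carrier R"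
    "a = l \<oplus> t \<otimes> u" "b = l' \<oplus> t' \<otimes> u" by blast
  moreover have "l \<in> carrier R" "l' \<in> carrier R" using h left_idealD(1)[OF L] by auto
  ultimately have "a \<oplus> b = (l \<oplus> l') \<oplus> (t \<oplus> t') \<otimes> u"
    using u by (simp add: l_distr a_ac)
  then show "a \<oplus> b \<in> ?K" using h left_idealD(3)[OF L] by blast
next
  fix a assume "a \<in> ?K"
  then obtain l t where h: "l \<in> L" "t \<in> carrier R" "a = l \<oplus> t \<otimes> u" by blast
  then have "\<ominus> a = \<ominus> l \<oplus> (\<ominus> t) \<otimes> u"
    using u left_idealD(1)[OF L] by (auto simp: minus_add l_minus)
  then show "\<ominus> a \<in> ?K" using h left_idealD(4)[OF L] by blast
next
  fix a x assume "a \<in> ?K" "x \<in> carrier R"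
  then obtain l t where h: "l \<in> L" "t \<in> carrier R" "a = l \<oplus> t \<otimes> u" "x \<in> carrier R" by blast
  then have "x \<otimes> a = x \<otimes> l \<oplus> (x \<otimes> t) \<otimes> u"
    using u left_idealD(1)[OF L] by (auto simp: r_distr m_assoc)
  then show "x \<otimes> a \<in> ?K" using h left_idealD(5)[OF L] by blast
qed

lemma (in ring) in_jacobsonI:
  assumes u: "u \<in> carrier R"
    and left_inv: "\<And>t. t \<in> carrier R \<Longrightarrow> \<exists>v\<in>carrier R. v \<otimes> (\<one> \<ominus> t \<otimes> u) = \<one>"
  shows "u \<in> jacobson R"
  unfolding jacobson_def
proof (intro IntI InterI, rule u, clarify)
  fix L assume L: "maximal_left_ideal L R"
  then have Ll: "left_ideal L R" and "\<one> \<notin> L"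
    using left_ideal_one_carrier unfolding maximal_left_ideal_def by blast+
  show "u \<in> L"
  proof (rule ccontr)
    assume "u \<notin> L"
    \<comment> \<open>Then L + R u is everything, so 1 = l + t u and l = 1 - t u is left invertible.\<close>
    let ?K = "{l \<oplus> t \<otimes> u | l t. l \<in> L \<and> t \<in> carrier R}"
    have "L \<subseteq> ?K"
    proof
      fix l assume "l \<in> L"
      moreover have "l = l \<oplus> \<zero> \<otimes> u" using \<open>l \<in> L\<close> u left_idealD(1)[OF Ll] by auto
      ultimately show "l \<in> ?K" by blast
    qed
    moreover have "u \<in> ?K"
      using left_idealD(2)[OF Ll] u by (intro CollectI exI[of _ \<zero>] exI[of _ \<one>]) simp
    ultimately have "?K = carrier R"
      using L left_ideal_add_left_multiples[OF Ll u] \<open>u \<notin> L\<close> unfolding maximal_left_ideal_def by blast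
    then obtain l t where lt: "l \<in> L" "t \<in> carrier R" "\<one> = l \<oplus> t \<otimes> u"
      using one_closed by blast
    moreover have "l \<in> carrier R" using lt left_idealD(1)[OF Ll] by blast
    ultimately have "\<one> \<ominus> t \<otimes> u = l" using u by (simp add: a_minus_def a_assoc r_neg)
    moreover obtain v where "v \<in> carrier R" "v \<otimes> (\<one> \<ominus> t \<otimes> u) = \<one>" using left_inv lt by blast
    ultimately have "\<one> \<in> L" using left_idealD(5)[OF Ll lt(1)] by metis
    with \<open>\<one> \<notin> L\<close> show False ..
  qed
qed

lemma (in ring) strongly_J_clean_of_jacobson:
  assumes "a \<in> jacobson R" shows "strongly_J_clean R a"
proof -
  have "a \<in> carrier R" using assms unfolding jacobson_def by blast
  then have "a \<otimes> \<zero> = \<zero> \<otimes> a" "a \<ominus> \<zero> = a" by (simp_all add: a_minus_def)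
  then show ?thesis using assms unfolding strongly_J_clean_def
    by (intro bexI[of _ \<zero>] conjI) simp_all
qed

lemma (in cring) nonunit_in_maximalideal:
  assumes x: "x \<in> carrier R" "x \<notin> Units R"
  shows "\<exists>M. maximalideal M R \<and> x \<in> M"
proof -
  let ?S = "{I. ideal I R \<and> x \<in> I \<and> \<one> \<notin> I}"
  have "\<one> \<notin> PIdl x"
  proof
    assume "\<one> \<in> PIdl x"
    then obtain y where "y \<in> carrier R" "\<one> = y \<otimes> x" unfolding cgenideal_def by auto
    then have "x \<in> Units R" using x(1) m_comm unfolding Units_def by force
    with x(2) show False ..
  qed
  then have "PIdl x \<in> ?S" using x(1) cgenideal_ideal cgenideal_self by blast
  have "\<exists>M\<in>?S. \<forall>K\<in>?S. M \<subseteq> K \<longrightarrow> K = M"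
  proof (rule subset_Zorn_nonempty)
    fix C assume C: "C \<noteq> {}" "subset.chain ?S C"
    then have "subset.chain {I. ideal I R} C" unfolding pred_on.chain_def by blast
    then have "ideal (\<Union>C) R" using chain_Union_is_ideal C(1) by presburger
    then show "\<Union>C \<in> ?S" using C unfolding pred_on.chain_def by auto
  qed (use \<open>PIdl x \<in> ?S\<close> in blast)
  then obtain M where M: "M \<in> ?S" "\<And>K. K \<in> ?S \<Longrightarrow> M \<subseteq> K \<Longrightarrow> K = M" by blast
  have "maximalideal M R"
  proof (rule maximalidealI)
    show "ideal M R" "carrier R \<noteq> M" using M(1) by auto
    fix J assume "ideal J R" "M \<subseteq> J" "J \<subseteq> carrier R"
    then show "J = M \<or> J = carrier R" using M ideal.one_imp_carrier by blast
  qed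
  then show ?thesis using M(1) by blast
qed

locale local_ring = cring +
  fixes M
  assumes maximalideal_M: "maximalideal M R"
    and maximalideal_unique: "maximalideal M' R \<Longrightarrow> M' = M"
begin

sublocale M: ideal M R
  using maximalideal_M by (rule maximalideal.axioms(1))

lemma one_not_in_M: "\<one> \<notin> M"
  using M.one_imp_carrier maximalideal.I_notcarr[OF maximalideal_M] by blast

lemma unit_of_not_in_M: "x \<in> carrier R \<Longrightarrow> x \<notin> M \<Longrightarrow> x \<in> Units R"
  using nonunit_in_maximalideal maximalideal_unique by blast

lemma one_plus_M_unit:
  assumes "m \<in> M" shows "\<one> \<oplus> m \<in> Units R"
proof (rule unit_of_not_in_M)
  show "\<one> \<oplus> m \<in> carrier R" using assms M.Icarr by simp
  show "\<one> \<oplus> m \<notin> M"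
  proof
    assume "\<one> \<oplus> m \<in> M"
    moreover have "\<one> = (\<one> \<oplus> m) \<ominus> m" using assms M.Icarr by algebra
    ultimately show False using assms one_not_in_M M.a_closed M.a_inv_closed by (metis a_minus_def)
  qed
qed

lemma in_M_of_add_in_M:
  assumes "x \<in> carrier R" "m \<in> M" "x \<oplus> m \<in> M" shows "x \<in> M"
proof -
  have "x = (x \<oplus> m) \<ominus> m" using assms M.Icarr by algebra
  then show ?thesis using assms M.a_closed M.a_inv_closed by (metis a_minus_def)
qed

lemma linear_combination_in_M:
  "x \<in> carrier R \<Longrightarrow> y \<in> carrier R \<Longrightarrow> m \<in> M \<Longrightarrow> n \<in> M \<Longrightarrow> x \<otimes> m \<oplus> y \<otimes> n \<in> M"
  by (simp add: M.a_closed M.I_l_closed)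

lemma one_in_span_of_not_both_in_M:
  assumes "a \<in> carrier R" "c \<in> carrier R" "s \<in> carrier R" "\<not> (a \<in> M \<and> s \<otimes> c \<in> M)"
  shows "\<exists>\<alpha>\<in>carrier R. \<exists>\<beta>\<in>carrier R. \<alpha> \<otimes> a \<oplus> \<beta> \<otimes> (s \<otimes> s \<otimes> c) = \<one>"
proof (cases "a \<in> M")
  case False
  then have "inv a \<otimes> a \<oplus> \<zero> \<otimes> (s \<otimes> s \<otimes> c) = \<one>" using assms unit_of_not_in_M by simp
  then show ?thesis using assms False unit_of_not_in_M by blast
next
  case True
  then have "s \<otimes> c \<notin> M" "s \<notin> M" using assms M.I_r_closed by auto
  then have "s \<otimes> (s \<otimes> c) \<in> Units R" using assms unit_of_not_in_M by simp
  then have "\<zero> \<otimes> a \<oplus> inv (s \<otimes> s \<otimes> c) \<otimes> (s \<otimes> s \<otimes> c) = \<one>" using assms by (simp add: m_assoc)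
  then show ?thesis using assms \<open>s \<otimes> (s \<otimes> c) \<in> Units R\<close> by (metis m_assoc zero_closed Units_inv_closed)
qed

lemma jacobson_eq_M: "jacobson R = M"
proof
  have "maximal_left_ideal M R"
  proof (rule maximal_left_idealI)
    fix x assume "x \<in> carrier R" "x \<notin> M"
    then have "inv x \<otimes> x \<oplus> \<zero> = \<one>" using unit_of_not_in_M by simp
    then show "\<exists>y\<in>carrier R. \<exists>l\<in>M. y \<otimes> x \<oplus> l = \<one>"
      using \<open>x \<in> carrier R\<close> \<open>x \<notin> M\<close> unit_of_not_in_M M.zero_closed by blast
  qed (use left_ideal_of_ideal M.is_ideal one_not_in_M in auto)
  then show "jacobson R \<subseteq> M" by (rule jacobson_subset_maximal_left_ideal)
next
  show "M \<subseteq> jacobson R"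
  proof
    fix u assume u: "u \<in> M"
    show "u \<in> jacobson R"
    proof (rule in_jacobsonI)
      fix t assume "t \<in> carrier R"
      then have "\<one> \<ominus> t \<otimes> u \<in> Units R"
        using one_plus_M_unit M.I_l_closed M.a_inv_closed u unfolding a_minus_def by blast
      then show "\<exists>v\<in>carrier R. v \<otimes> (\<one> \<ominus> t \<otimes> u) = \<one>"
        using Units_l_inv Units_inv_closed by blast
    qed (use u M.Icarr in blast)
  qed
qed

end

lemma M2s_carrier [simp]:
  "(a,b,c,d) \<in> carrier (M2s R s) \<longleftrightarrow> a \<in> carrier R \<and> b \<in> carrier R \<and> c \<in> carrier R \<and> d \<in> carrier R"
  by (simp add: M2s_def)

lemma M2s_mult [simp]:
  "(a,b,c,d) \<otimes>\<^bsub>M2s R s\<^esub> (a',b',c',d') =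
   (a \<otimes>\<^bsub>R\<^esub> a' \<oplus>\<^bsub>R\<^esub> s \<otimes>\<^bsub>R\<^esub> s \<otimes>\<^bsub>R\<^esub> b \<otimes>\<^bsub>R\<^esub> c', a \<otimes>\<^bsub>R\<^esub> b' \<oplus>\<^bsub>R\<^esub> b \<otimes>\<^bsub>R\<^esub> d',
    c \<otimes>\<^bsub>R\<^esub> a' \<oplus>\<^bsub>R\<^esub> d \<otimes>\<^bsub>R\<^esub> c', s \<otimes>\<^bsub>R\<^esub> s \<otimes>\<^bsub>R\<^esub> c \<otimes>\<^bsub>R\<^esub> b' \<oplus>\<^bsub>R\<^esub> d \<otimes>\<^bsub>R\<^esub> d')"
  by (simp add: M2s_def m2_mult_def)

lemma M2s_add [simp]:
  "(a,b,c,d) \<oplus>\<^bsub>M2s R s\<^esub> (a',b',c',d') =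
   (a \<oplus>\<^bsub>R\<^esub> a', b \<oplus>\<^bsub>R\<^esub> b', c \<oplus>\<^bsub>R\<^esub> c', d \<oplus>\<^bsub>R\<^esub> d')"
  by (simp add: M2s_def m2_add_def)

lemma M2s_one: "\<one>\<^bsub>M2s R s\<^esub> = (\<one>\<^bsub>R\<^esub>, \<zero>\<^bsub>R\<^esub>, \<zero>\<^bsub>R\<^esub>, \<one>\<^bsub>R\<^esub>)"
  by (simp add: M2s_def)

lemma M2s_zero: "\<zero>\<^bsub>M2s R s\<^esub> = (\<zero>\<^bsub>R\<^esub>, \<zero>\<^bsub>R\<^esub>, \<zero>\<^bsub>R\<^esub>, \<zero>\<^bsub>R\<^esub>)"
  by (simp add: M2s_def)

lemma det_s_simp [simp]: "det_s R s (a,b,c,d) = a \<otimes>\<^bsub>R\<^esub> d \<ominus>\<^bsub>R\<^esub> s \<otimes>\<^bsub>R\<^esub> s \<otimes>\<^bsub>R\<^esub> b \<otimes>\<^bsub>R\<^esub> c"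
  by (simp add: det_s_def)

lemma tr2_simp [simp]: "tr2 R (a,b,c,d) = a \<oplus>\<^bsub>R\<^esub> d"
  by (simp add: tr2_def)

locale m2s_ring = cring +
  fixes s
  assumes s_closed [simp]: "s \<in> carrier R"
begin

lemma ring_M2s: "ring (M2s R s)"
proof (rule ringI)
  show "abelian_group (M2s R s)"
  proof (rule abelian_groupI)
    fix x assume "x \<in> carrier (M2s R s)"
    then show "\<exists>y\<in>carrier (M2s R s). y \<oplus>\<^bsub>M2s R s\<^esub> x = \<zero>\<^bsub>M2s R s\<^esub>"
    proof (cases x)
      case (fields a b c d)
      then show ?thesis using \<open>x \<in> carrier (M2s R s)\<close>
        by (intro bexI[of _ "(\<ominus> a, \<ominus> b, \<ominus> c, \<ominus> d)"]) (simp_all add: M2s_zero l_neg)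
    qed
  qed (auto simp: M2s_zero a_ac)
next
  show "monoid (M2s R s)"
  proof (rule monoidI)
    fix x y z assume "x \<in> carrier (M2s R s)" "y \<in> carrier (M2s R s)" "z \<in> carrier (M2s R s)"
    then show "x \<otimes>\<^bsub>M2s R s\<^esub> y \<otimes>\<^bsub>M2s R s\<^esub> z = x \<otimes>\<^bsub>M2s R s\<^esub> (y \<otimes>\<^bsub>M2s R s\<^esub> z)"
      by (cases x; cases y; cases z) (clarsimp; intro conjI; insert s_closed; algebra)
  qed (auto simp: M2s_one)
next
  fix x y z assume "x \<in> carrier (M2s R s)" "y \<in> carrier (M2s R s)" "z \<in> carrier (M2s R s)"
  then show "(x \<oplus>\<^bsub>M2s R s\<^esub> y) \<otimes>\<^bsub>M2s R s\<^esub> z = x \<otimes>\<^bsub>M2s R s\<^esub> z \<oplus>\<^bsub>M2s R s\<^esub> y \<otimes>\<^bsub>M2s R s\<^esub> z"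
    and "z \<otimes>\<^bsub>M2s R s\<^esub> (x \<oplus>\<^bsub>M2s R s\<^esub> y) = z \<otimes>\<^bsub>M2s R s\<^esub> x \<oplus>\<^bsub>M2s R s\<^esub> z \<otimes>\<^bsub>M2s R s\<^esub> y"
    by (cases x; cases y; cases z; clarsimp; intro conjI; insert s_closed; algebra)+
qed

sublocale M2: ring "M2s R s"
  by (rule ring_M2s)

lemma M2s_neg [simp]:
  "(a,b,c,d) \<in> carrier (M2s R s) \<Longrightarrow> \<ominus>\<^bsub>M2s R s\<^esub> (a,b,c,d) = (\<ominus> a, \<ominus> b, \<ominus> c, \<ominus> d)"
  by (rule M2.minus_equality) (simp_all add: M2s_zero l_neg)

lemma det_s_closed: "A \<in> carrier (M2s R s) \<Longrightarrow> det_s R s A \<in> carrier R"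
  by (cases A) simp

lemma tr2_closed: "A \<in> carrier (M2s R s) \<Longrightarrow> tr2 R A \<in> carrier R"
  by (cases A) simp

lemma cayley_hamilton:
  assumes "(p,q,r,t) \<in> carrier (M2s R s)"
  shows "(p,q,r,t) \<otimes>\<^bsub>M2s R s\<^esub> (p,q,r,t) =
    (tr2 R (p,q,r,t) \<otimes> p \<ominus> det_s R s (p,q,r,t), tr2 R (p,q,r,t) \<otimes> q,
     tr2 R (p,q,r,t) \<otimes> r, tr2 R (p,q,r,t) \<otimes> t \<ominus> det_s R s (p,q,r,t))"
  using assms by clarsimp (intro conjI; insert s_closed; algebra)

lemma M2s_left_inverse:
  assumes A: "A \<in> carrier (M2s R s)" and det: "det_s R s A \<in> Units R"
  shows "\<exists>V\<in>carrier (M2s R s). V \<otimes>\<^bsub>M2s R s\<^esub> A = \<one>\<^bsub>M2s R s\<^esub>"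
proof (cases A)
  case (fields a b c d)
  define i where "i = inv (det_s R s A)"
  have i: "i \<in> carrier R" "i \<otimes> (a \<otimes> d \<ominus> s \<otimes> s \<otimes> b \<otimes> c) = \<one>"
    using det fields unfolding i_def by simp_all
  have "(i \<otimes> d, \<ominus> (i \<otimes> b), \<ominus> (i \<otimes> c), i \<otimes> a) \<otimes>\<^bsub>M2s R s\<^esub> A =
        (i \<otimes> (a \<otimes> d \<ominus> s \<otimes> s \<otimes> b \<otimes> c), \<zero>, \<zero>, i \<otimes> (a \<otimes> d \<ominus> s \<otimes> s \<otimes> b \<otimes> c))"
    using A i(1) unfolding fields by clarsimp (intro conjI; insert s_closed; algebra)
  then have "(i \<otimes> d, \<ominus> (i \<otimes> b), \<ominus> (i \<otimes> c), i \<otimes> a) \<otimes>\<^bsub>M2s R s\<^esub> A = \<one>\<^bsub>M2s R s\<^esub>"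
    by (simp add: i(2) M2s_one)
  moreover have "(i \<otimes> d, \<ominus> (i \<otimes> b), \<ominus> (i \<otimes> c), i \<otimes> a) \<in> carrier (M2s R s)"
    using A i(1) fields by simp
  ultimately show ?thesis by blast
qed

end

locale local_m2s = local_ring + m2s_ring
begin

definition jac_M2s :: "('a \<times> 'a \<times> 'a \<times> 'a) set" where
  "jac_M2s = {(a,b,c,d). (a,b,c,d) \<in> carrier (M2s R s) \<and> a \<in> M \<and> d \<in> M \<and> s \<otimes> b \<in> M \<and> s \<otimes> c \<in> M}"

definition first_column_ideal :: "('a \<times> 'a \<times> 'a \<times> 'a) set" where
  "first_column_ideal = {(a,b,c,d). (a,b,c,d) \<in> carrier (M2s R s) \<and> a \<in> M \<and> s \<otimes> c \<in> M}"

definition second_column_ideal :: "('a \<times> 'a \<times> 'a \<times> 'a) set" where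
  "second_column_ideal = {(a,b,c,d). (a,b,c,d) \<in> carrier (M2s R s) \<and> d \<in> M \<and> s \<otimes> b \<in> M}"

lemma jac_M2s_eq_Int: "jac_M2s = first_column_ideal \<inter> second_column_ideal"
  unfolding jac_M2s_def first_column_ideal_def second_column_ideal_def by auto

lemma left_ideal_first_column: "left_ideal first_column_ideal (M2s R s)"
proof (rule M2.left_idealI)
  fix A B assume "A \<in> first_column_ideal" "B \<in> carrier (M2s R s)"
  then show "B \<otimes>\<^bsub>M2s R s\<^esub> A \<in> first_column_ideal"
  proof (cases A; cases B)
    fix a b c d p q r t assume AB: "A = (a,b,c,d)" "B = (p,q,r,t)"
    with \<open>A \<in> first_column_ideal\<close> \<open>B \<in> carrier (M2s R s)\<close>
    have c: "a \<in> carrier R" "b \<in> carrier R" "c \<in> carrier R" "d \<in> carrier R"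
      "p \<in> carrier R" "q \<in> carrier R" "r \<in> carrier R" "t \<in> carrier R" and m: "a \<in> M" "s \<otimes> c \<in> M"
      unfolding first_column_ideal_def by auto
    have "p \<otimes> a \<oplus> s \<otimes> s \<otimes> q \<otimes> c = p \<otimes> a \<oplus> (s \<otimes> q) \<otimes> (s \<otimes> c)"
      "s \<otimes> (r \<otimes> a \<oplus> t \<otimes> c) = (s \<otimes> r) \<otimes> a \<oplus> t \<otimes> (s \<otimes> c)" using c s_closed by algebra+
    moreover have "p \<otimes> a \<oplus> (s \<otimes> q) \<otimes> (s \<otimes> c) \<in> M" "(s \<otimes> r) \<otimes> a \<oplus> t \<otimes> (s \<otimes> c) \<in> M"
      using m c by (simp_all add: linear_combination_in_M)
    ultimately show ?thesis using c unfolding AB first_column_ideal_def by simp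
  qed
qed (auto simp: first_column_ideal_def M2s_zero r_distr r_minus M.a_closed M.a_inv_closed M.I_r_closed)

lemma left_ideal_second_column: "left_ideal second_column_ideal (M2s R s)"
proof (rule M2.left_idealI)
  fix A B assume "A \<in> second_column_ideal" "B \<in> carrier (M2s R s)"
  then show "B \<otimes>\<^bsub>M2s R s\<^esub> A \<in> second_column_ideal"
  proof (cases A; cases B)
    fix a b c d p q r t assume AB: "A = (a,b,c,d)" "B = (p,q,r,t)"
    with \<open>A \<in> second_column_ideal\<close> \<open>B \<in> carrier (M2s R s)\<close>
    have c: "a \<in> carrier R" "b \<in> carrier R" "c \<in> carrier R" "d \<in> carrier R"
      "p \<in> carrier R" "q \<in> carrier R" "r \<in> carrier R" "t \<in> carrier R" and m: "d \<in> M" "s \<otimes> b \<in> M"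
      unfolding second_column_ideal_def by auto
    have "s \<otimes> s \<otimes> r \<otimes> b \<oplus> t \<otimes> d = (s \<otimes> r) \<otimes> (s \<otimes> b) \<oplus> t \<otimes> d"
      "s \<otimes> (p \<otimes> b \<oplus> q \<otimes> d) = p \<otimes> (s \<otimes> b) \<oplus> (s \<otimes> q) \<otimes> d" using c s_closed by algebra+
    moreover have "(s \<otimes> r) \<otimes> (s \<otimes> b) \<oplus> t \<otimes> d \<in> M" "p \<otimes> (s \<otimes> b) \<oplus> (s \<otimes> q) \<otimes> d \<in> M"
      using m c by (simp_all add: linear_combination_in_M)
    ultimately show ?thesis using c unfolding AB second_column_ideal_def by simp
  qed
qed (auto simp: second_column_ideal_def M2s_zero r_distr r_minus M.a_closed M.a_inv_closed M.I_r_closed)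

lemma maximal_first_column: "maximal_left_ideal first_column_ideal (M2s R s)"
proof (rule M2.maximal_left_idealI[OF left_ideal_first_column])
  show "\<one>\<^bsub>M2s R s\<^esub> \<notin> first_column_ideal"
    using one_not_in_M by (simp add: M2s_one first_column_ideal_def)
next
  fix A assume A: "A \<in> carrier (M2s R s)" "A \<notin> first_column_ideal"
  then obtain a b c d where Ad: "A = (a,b,c,d)" and c: "a \<in> carrier R" "b \<in> carrier R" "c \<in> carrier R" "d \<in> carrier R"
    by (cases A) auto
  have "\<not> (a \<in> M \<and> s \<otimes> c \<in> M)"
    using A c unfolding Ad first_column_ideal_def by auto
  then obtain \<alpha> \<beta> where \<alpha>\<beta>: "\<alpha> \<in> carrier R" "\<beta> \<in> carrier R" "\<alpha> \<otimes> a \<oplus> \<beta> \<otimes> (s \<otimes> s \<otimes> c) = \<one>"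
    using one_in_span_of_not_both_in_M[OF c(1) c(3) s_closed] by blast
  let ?B = "(\<alpha>, \<beta>, \<zero>, \<zero>)" and ?L = "(\<zero>, \<ominus> (\<alpha> \<otimes> b \<oplus> \<beta> \<otimes> d), \<zero>, \<one>)"
  have "?B \<otimes>\<^bsub>M2s R s\<^esub> A \<oplus>\<^bsub>M2s R s\<^esub> ?L = (\<alpha> \<otimes> a \<oplus> \<beta> \<otimes> (s \<otimes> s \<otimes> c), \<zero>, \<zero>, \<one>)"
    using c \<alpha>\<beta>(1,2) unfolding Ad by clarsimp (intro conjI; insert s_closed; algebra)
  moreover have "?B \<in> carrier (M2s R s)" "?L \<in> first_column_ideal"
    using c \<alpha>\<beta> M.zero_closed by (simp_all add: first_column_ideal_def)
  ultimately show "\<exists>B\<in>carrier (M2s R s). \<exists>L\<in>first_column_ideal. B \<otimes>\<^bsub>M2s R s\<^esub> A \<oplus>\<^bsub>M2s R s\<^esub> L = \<one>\<^bsub>M2s R s\<^esub>"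
    using \<alpha>\<beta>(3) by (metis M2s_one)
qed

lemma maximal_second_column: "maximal_left_ideal second_column_ideal (M2s R s)"
proof (rule M2.maximal_left_idealI[OF left_ideal_second_column])
  show "\<one>\<^bsub>M2s R s\<^esub> \<notin> second_column_ideal"
    using one_not_in_M by (simp add: M2s_one second_column_ideal_def)
next
  fix A assume A: "A \<in> carrier (M2s R s)" "A \<notin> second_column_ideal"
  then obtain a b c d where Ad: "A = (a,b,c,d)" and c: "a \<in> carrier R" "b \<in> carrier R" "c \<in> carrier R" "d \<in> carrier R"
    by (cases A) auto
  have "\<not> (d \<in> M \<and> s \<otimes> b \<in> M)"
    using A c unfolding Ad second_column_ideal_def by auto
  then obtain \<alpha> \<beta> where \<alpha>\<beta>: "\<alpha> \<in> carrier R" "\<beta> \<in> carrier R" "\<alpha> \<otimes> d \<oplus> \<beta> \<otimes> (s \<otimes> s \<otimes> b) = \<one>"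
    using one_in_span_of_not_both_in_M[OF c(4) c(2) s_closed] by blast
  let ?B = "(\<zero>, \<zero>, \<beta>, \<alpha>)" and ?L = "(\<one>, \<zero>, \<ominus> (\<beta> \<otimes> a \<oplus> \<alpha> \<otimes> c), \<zero>)"
  have "?B \<otimes>\<^bsub>M2s R s\<^esub> A \<oplus>\<^bsub>M2s R s\<^esub> ?L = (\<one>, \<zero>, \<zero>, \<alpha> \<otimes> d \<oplus> \<beta> \<otimes> (s \<otimes> s \<otimes> b))"
    using c \<alpha>\<beta>(1,2) unfolding Ad by clarsimp (intro conjI; insert s_closed; algebra)
  moreover have "?B \<in> carrier (M2s R s)" "?L \<in> second_column_ideal"
    using c \<alpha>\<beta> M.zero_closed by (simp_all add: second_column_ideal_def)
  ultimately show "\<exists>B\<in>carrier (M2s R s). \<exists>L\<in>second_column_ideal. B \<otimes>\<^bsub>M2s R s\<^esub> A \<oplus>\<^bsub>M2s R s\<^esub> L = \<one>\<^bsub>M2s R s\<^esub>"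
    using \<alpha>\<beta>(3) by (metis M2s_one)
qed

lemma left_ideal_jac_M2s: "left_ideal jac_M2s (M2s R s)"
  unfolding jac_M2s_eq_Int by (rule M2.left_ideal_Int[OF left_ideal_first_column left_ideal_second_column])

lemma det_s_add_jac_M2s:
  assumes "E \<in> carrier (M2s R s)" "N \<in> jac_M2s"
  shows "\<exists>m\<in>M. det_s R s (E \<oplus>\<^bsub>M2s R s\<^esub> N) = det_s R s E \<oplus> m"
proof (cases E; cases N)
  fix p q r t a b c d assume EN: "E = (p,q,r,t)" "N = (a,b,c,d)"
  then have c: "p \<in> carrier R" "q \<in> carrier R" "r \<in> carrier R" "t \<in> carrier R"
    "a \<in> carrier R" "b \<in> carrier R" "c \<in> carrier R" "d \<in> carrier R"
    and m: "a \<in> M" "d \<in> M" "s \<otimes> b \<in> M" "s \<otimes> c \<in> M" using assms unfolding jac_M2s_def by auto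
  define m where "m = (p \<otimes> d \<oplus> (t \<oplus> d) \<otimes> a) \<ominus> ((s \<otimes> q) \<otimes> (s \<otimes> c) \<oplus> (s \<otimes> r \<oplus> s \<otimes> c) \<otimes> (s \<otimes> b))"
  have "det_s R s (E \<oplus>\<^bsub>M2s R s\<^esub> N) = det_s R s E \<oplus> m"
    unfolding EN m_def using c by simp (insert s_closed; algebra)
  moreover have "m \<in> M"
    unfolding m_def a_minus_def using m c by (intro M.a_closed M.a_inv_closed linear_combination_in_M) simp_all
  ultimately show ?thesis by blast
qed

lemma tr2_add_jac_M2s:
  assumes "E \<in> carrier (M2s R s)" "N \<in> jac_M2s"
  shows "\<exists>m\<in>M. tr2 R (E \<oplus>\<^bsub>M2s R s\<^esub> N) = tr2 R E \<oplus> m"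
proof (cases E; cases N)
  fix p q r t a b c d assume EN: "E = (p,q,r,t)" "N = (a,b,c,d)"
  then have "tr2 R (E \<oplus>\<^bsub>M2s R s\<^esub> N) = tr2 R E \<oplus> (a \<oplus> d)"
    using assms unfolding jac_M2s_def by simp algebra
  moreover have "a \<oplus> d \<in> M" using assms EN M.a_closed unfolding jac_M2s_def by auto
  ultimately show ?thesis by blast
qed

lemma jacobson_M2s: "jacobson (M2s R s) = jac_M2s"
proof
  show "jacobson (M2s R s) \<subseteq> jac_M2s"
    unfolding jac_M2s_eq_Int
    using jacobson_subset_maximal_left_ideal[OF maximal_first_column]
      jacobson_subset_maximal_left_ideal[OF maximal_second_column]
    by (rule Int_greatest)
next
  show "jac_M2s \<subseteq> jacobson (M2s R s)"
  proof
    fix U assume U: "U \<in> jac_M2s"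
    have U_closed: "U \<in> carrier (M2s R s)"
      using U left_idealD(1)[OF left_ideal_jac_M2s] by (rule subsetD[rotated])
    show "U \<in> jacobson (M2s R s)"
    proof (rule M2.in_jacobsonI[OF U_closed])
      fix T assume T: "T \<in> carrier (M2s R s)"
      let ?W = "\<one>\<^bsub>M2s R s\<^esub> \<ominus>\<^bsub>M2s R s\<^esub> T \<otimes>\<^bsub>M2s R s\<^esub> U"
      have "\<ominus>\<^bsub>M2s R s\<^esub> (T \<otimes>\<^bsub>M2s R s\<^esub> U) \<in> jac_M2s"
        using left_idealD(4,5)[OF left_ideal_jac_M2s] U T by blast
      from det_s_add_jac_M2s[OF M2.one_closed this]
      obtain m where "m \<in> M" "det_s R s ?W = det_s R s \<one>\<^bsub>M2s R s\<^esub> \<oplus> m"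
        unfolding a_minus_def by blast
      moreover have "det_s R s \<one>\<^bsub>M2s R s\<^esub> = \<one>"
        by (simp add: M2s_one a_minus_def)
      ultimately have "det_s R s ?W \<in> Units R"
        using one_plus_M_unit by simp
      then show "\<exists>V\<in>carrier (M2s R s). V \<otimes>\<^bsub>M2s R s\<^esub> ?W = \<one>\<^bsub>M2s R s\<^esub>"
        using M2s_left_inverse T U_closed by simp
    qed
  qed
qed

lemma idempotent_in_jac_M2s:
  assumes E: "E \<in> carrier (M2s R s)" "E \<otimes>\<^bsub>M2s R s\<^esub> E = E"
    and tr: "tr2 R E \<in> M" and det: "det_s R s E \<in> M"
  shows "E \<in> jac_M2s"
proof (cases E)
  case (fields p q r t)
  define \<tau> \<delta> where "\<tau> = tr2 R E" and "\<delta> = det_s R s E"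
  have "E = E \<otimes>\<^bsub>M2s R s\<^esub> E" using E(2) by simp
  also have "\<dots> = (\<tau> \<otimes> p \<ominus> \<delta>, \<tau> \<otimes> q, \<tau> \<otimes> r, \<tau> \<otimes> t \<ominus> \<delta>)"
    unfolding fields \<tau>_def \<delta>_def by (rule cayley_hamilton) (use E fields in simp)
  finally have "E = (\<tau> \<otimes> p \<ominus> \<delta>, \<tau> \<otimes> q, \<tau> \<otimes> r, \<tau> \<otimes> t \<ominus> \<delta>)" .
  moreover have "\<tau> \<in> M" "\<delta> \<in> M" using tr det unfolding \<tau>_def \<delta>_def .
  moreover have "p \<in> carrier R" "q \<in> carrier R" "r \<in> carrier R" "t \<in> carrier R"
    using E fields by auto
  ultimately show ?thesis unfolding jac_M2s_def a_minus_def
    by (simp add: M.Icarr M.a_closed M.a_inv_closed M.I_l_closed M.I_r_closed)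
qed

lemma det_tr_in_M_of_jac_M2s:
  assumes "A \<in> jac_M2s" shows "det_s R s A \<in> M" "tr2 R A \<in> M"
proof -
  have A: "\<zero>\<^bsub>M2s R s\<^esub> \<oplus>\<^bsub>M2s R s\<^esub> A = A"
    using assms left_idealD(1)[OF left_ideal_jac_M2s] by auto
  have zero: "det_s R s \<zero>\<^bsub>M2s R s\<^esub> = \<zero>" "tr2 R \<zero>\<^bsub>M2s R s\<^esub> = \<zero>"
    by (simp_all add: M2s_zero a_minus_def)
  from det_s_add_jac_M2s[OF M2.zero_closed assms] show "det_s R s A \<in> M"
    unfolding A zero using M.Icarr by auto
  from tr2_add_jac_M2s[OF M2.zero_closed assms] show "tr2 R A \<in> M"
    unfolding A zero using M.Icarr by auto
qed

lemma in_jac_M2s_of_strongly_J_clean: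
  assumes A: "A \<in> carrier (M2s R s)" and det: "det_s R s A \<in> M" and tr: "tr2 R A \<in> M"
    and "strongly_J_clean (M2s R s) A"
  shows "A \<in> jac_M2s"
proof -
  obtain E where E: "E \<in> carrier (M2s R s)" "E \<otimes>\<^bsub>M2s R s\<^esub> E = E"
    and N: "A \<ominus>\<^bsub>M2s R s\<^esub> E \<in> jac_M2s"
    using assms(4) unfolding strongly_J_clean_def jacobson_M2s by blast
  have A_eq: "E \<oplus>\<^bsub>M2s R s\<^esub> (A \<ominus>\<^bsub>M2s R s\<^esub> E) = A"
    unfolding M2.minus_eq M2.a_comm[OF A M2.a_inv_closed[OF E(1)]] by (rule M2.r_neg2[OF E(1) A])
  from det_s_add_jac_M2s[OF E(1) N] obtain m where m: "m \<in> M" "det_s R s A = det_s R s E \<oplus> m"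
    unfolding A_eq by blast
  from tr2_add_jac_M2s[OF E(1) N] obtain m' where m': "m' \<in> M" "tr2 R A = tr2 R E \<oplus> m'"
    unfolding A_eq by blast
  have "det_s R s E \<in> M"
    using in_M_of_add_in_M[OF det_s_closed[OF E(1)] m(1)] det unfolding m(2) .
  moreover have "tr2 R E \<in> M"
    using in_M_of_add_in_M[OF tr2_closed[OF E(1)] m'(1)] tr unfolding m'(2) .
  ultimately have "E \<in> jac_M2s"
    using idempotent_in_jac_M2s E by blast
  from left_idealD(3)[OF left_ideal_jac_M2s this N] show ?thesis
    unfolding A_eq .
qed

end

theorem proposition3p3:
  fixes R :: "('a, 'b) ring_scheme" and s :: 'a and A :: "'a \<times> 'a \<times> 'a \<times> 'a"
  assumes "local_cring R"
    and "s \<in> carrier R"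
    and "A \<in> carrier (M2s R s)"
  shows "(det_s R s A \<in> jacobson R \<and> tr2 R A \<in> jacobson R \<and> strongly_J_clean (M2s R s) A)
         \<longleftrightarrow> A \<in> jacobson (M2s R s)"
proof -
  obtain M where "cring R" "maximalideal M R" "\<And>M'. maximalideal M' R \<Longrightarrow> M' = M"
    using assms(1) unfolding local_cring_def by metis
  then have "local_m2s R M s"
    using assms(2) by (intro local_m2s.intro local_ring.intro local_ring_axioms.intro m2s_ring.intro m2s_ring_axioms.intro)
  then interpret local_m2s R M s .
  show ?thesis
    unfolding jacobson_eq_M jacobson_M2s
    using in_jac_M2s_of_strongly_J_clean[OF assms(3)] det_tr_in_M_of_jac_M2s
      M2.strongly_J_clean_of_jacobson[unfolded jacobson_M2s]
    by blast
qed

end
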